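(* Let $s\ge0$ and let $(X_1,X_2,X_3,Y,U_1,U_2,U_3,U_4)$ have joint distribution factorizing as $$P_{X_1,X_2,X_3,Y}\,P_{U_1|X_1}\,P_{U_2|X_2}\,P_{U_3|X_3}\,P_{U_4|U_2,U_3}.$$ Then, with $\mathbf P=\{P_{U_1|X_1},P_{U_2|X_2},P_{U_3|X_3}\}$, $$\mathcal L_s(\mathbf P)\ \ge\ \mathcal L_s^{\rm low}(\mathbf P,P_{U_4|U_2,U_3}),$$ where $$\mathcal L_s(\mathbf P)=-H(Y|U_1,U_2,U_3)-s\big[I(X_1,X_2,X_3;U_1,U_2,U_3)+I(X_2,X_3;U_2,U_3|U_1)\big]$$ and $$\mathcal L_s^{\rm low}(\mathbf P,P_{U_4|U_2,U_3})=-H(Y|U_1,U_4)-sI(X_1;U_1)-2s\big[I(X_2;U_2)+I(X_3;U_3)\big]+2s\big[I(U_2;U_1)+I(U_3;U_1,U_2)\big].$$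
   Context: All random variables take values in finite sets; all information quantities are computed under the stated joint distribution. *)

theory Defs
  imports "HOL-Analysis.Analysis"
begin

text \<open>Discrete information measures (in bits) for random variables defined as
functions f of the outcome of a finite sample space carrying a pmf J.
Convention 0 log 0 = 0.\<close>

definition ent :: "('a::finite \<Rightarrow> real) \<Rightarrow> ('a \<Rightarrow> 'b) \<Rightarrow> real" where
  "ent J f = - (\<Sum>b\<in>f ` UNIV. (let m = (\<Sum>a\<in>{a. f a = b}. J a) in
                                  if m = 0 then 0 else m * log 2 m))"

definition cond_ent :: "('a::finite \<Rightarrow> real) \<Rightarrow> ('a \<Rightarrow> 'b) \<Rightarrow> ('a \<Rightarrow> 'c) \<Rightarrow> real" where
  "cond_ent J f g = ent J (\<lambda>a. (f a, g a)) - ent J g"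

definition mut_inf :: "('a::finite \<Rightarrow> real) \<Rightarrow> ('a \<Rightarrow> 'b) \<Rightarrow> ('a \<Rightarrow> 'c) \<Rightarrow> real" where
  "mut_inf J f g = ent J f + ent J g - ent J (\<lambda>a. (f a, g a))"

definition cond_mut_inf :: "('a::finite \<Rightarrow> real) \<Rightarrow> ('a \<Rightarrow> 'b) \<Rightarrow> ('a \<Rightarrow> 'c) \<Rightarrow> ('a \<Rightarrow> 'd) \<Rightarrow> real" where
  "cond_mut_inf J f g h = ent J (\<lambda>a. (f a, h a)) + ent J (\<lambda>a. (g a, h a))
                          - ent J (\<lambda>a. (f a, g a, h a)) - ent J h"

definition is_pmf :: "('a::finite \<Rightarrow> real) \<Rightarrow> bool" where
  "is_pmf p \<longleftrightarrow> (\<forall>a. 0 \<le> p a) \<and> (\<Sum>a\<in>UNIV. p a) = 1"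

definition is_kernel :: "('a \<Rightarrow> 'b::finite \<Rightarrow> real) \<Rightarrow> bool" where
  "is_kernel K \<longleftrightarrow> (\<forall>a. is_pmf (K a))"

end

theory Submission
  imports Defs
begin

(* The rate terms on the two sides coincide: by the product form of the joint distribution,
   each mutual information with an input Xi splits into an entropy of the U's plus the expected
   log-likelihood of a test channel, and both sides are the same combination of these quantities. For the distortion term, U4 is generated from
   (U2, U3) independently of everything else, hence
   H(Y | U1, U2, U3) = H(Y | U1, U4, U2, U3) <= H(Y | U1, U4),
   the last step because conditioning reduces entropy. *)

definition marginal :: "('a::finite \<Rightarrow> real) \<Rightarrow> ('a \<Rightarrow> 'b) \<Rightarrow> 'b \<Rightarrow> real" where
  "marginal J f b = sum J {a. f a = b}"

definition expected_log :: "('a::finite \<Rightarrow> real) \<Rightarrow> ('a \<Rightarrow> real) \<Rightarrow> real" where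
  "expected_log J k = (\<Sum>a\<in>UNIV. J a * log 2 (k a))"

lemma marginal_eq_sum_if: "marginal J f b = (\<Sum>a\<in>UNIV. if f a = b then J a else 0)"
  unfolding marginal_def by (simp add: sum.If_cases)

lemma marginal_nonneg: "(\<And>a. J a \<ge> 0) \<Longrightarrow> marginal J f b \<ge> 0"
  unfolding marginal_def by (simp add: sum_nonneg)

lemma marginal_pos:
  assumes "\<And>a. J a \<ge> 0" and "J a \<noteq> 0"
  shows "marginal J f (f a) > 0"
proof -
  have "J a \<le> marginal J f (f a)"
    unfolding marginal_def by (rule member_le_sum) (use assms in auto)
  with assms show ?thesis by (metis order_le_neq_trans order_less_le_trans)
qed

lemma sum_by_fibers: "(\<Sum>a\<in>UNIV. J a * F (f a)) = (\<Sum>b\<in>range f. marginal J f b * F b)"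
proof -
  have "(\<Sum>a\<in>UNIV. J a * F (f a)) = (\<Sum>b\<in>range f. \<Sum>a\<in>{a \<in> UNIV. f a = b}. J a * F (f a))"
    by (rule sum.image_gen) simp
  also have "\<dots> = (\<Sum>b\<in>range f. marginal J f b * F b)"
    by (rule sum.cong) (auto simp: marginal_def sum_distrib_right)
  finally show ?thesis .
qed

lemma sum_marginal: "(\<Sum>b\<in>range f. marginal J f b) = (\<Sum>a\<in>UNIV. J a)"
  using sum_by_fibers[of J "\<lambda>_. 1" f] by simp

lemma sum_marginal_fst: "(\<Sum>b\<in>range f. marginal J (\<lambda>a. (f a, g a)) (b, c)) = marginal J g c"
proof -
  have "(\<Sum>b\<in>range f. sum J {x \<in> {a. g a = c}. f x = b}) = sum J {a. g a = c}"
    by (rule sum.group) auto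
  then show ?thesis unfolding marginal_def by (simp add: conj_commute)
qed

lemma sum_marginal_snd: "(\<Sum>c\<in>range g. marginal J (\<lambda>a. (f a, g a)) (b, c)) = marginal J f b"
proof -
  have "(\<Sum>c\<in>range g. sum J {x \<in> {a. f a = b}. g x = c}) = sum J {a. f a = b}"
    by (rule sum.group) auto
  then show ?thesis unfolding marginal_def by simp
qed

lemma ent_eq_expected_log_marginal: "ent J f = - expected_log J (\<lambda>a. marginal J f (f a))"
proof -
  \<comment> \<open>the convention 0 log 0 = 0 is automatic, since log 2 0 = 0 in Isabelle\<close>
  have "(if m = 0 then 0 else m * log 2 m) = m * log 2 m" for m :: real
    by simp
  then show ?thesis
    using sum_by_fibers[of J "\<lambda>m. log 2 (marginal J f m)" f]
    by (simp add: ent_def expected_log_def marginal_def Let_def)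
qed

lemma ent_cong:
  assumes "\<And>a a'. f a = f a' \<longleftrightarrow> g a = g a'"
  shows "ent J f = ent J g"
proof -
  have "marginal J f (f a) = marginal J g (g a)" for a
    unfolding marginal_def using assms by metis
  then show ?thesis by (simp add: ent_eq_expected_log_marginal)
qed

lemma expected_log_mult:
  assumes "\<And>a. J a \<noteq> 0 \<Longrightarrow> k a > 0 \<and> l a > 0"
  shows "expected_log J (\<lambda>a. k a * l a) = expected_log J k + expected_log J l"
proof -
  have "J a * log 2 (k a * l a) = J a * log 2 (k a) + J a * log 2 (l a)" for a
    using assms[of a] by (cases "J a = 0") (auto simp: log_mult distrib_left)
  then show ?thesis unfolding expected_log_def by (simp add: sum.distrib)
qed

lemma expected_log_cong:
  assumes "\<And>a. J a \<noteq> 0 \<Longrightarrow> k a = l a"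
  shows "expected_log J k = expected_log J l"
  unfolding expected_log_def using assms by (intro sum.cong refl) (metis mult_zero_left)

lemma ent_eq_diff_expected_log:
  assumes nonneg: "\<And>a. J a \<ge> 0"
    and factor: "\<And>a. J a \<noteq> 0 \<Longrightarrow> marginal J f (f a) = marginal J g (g a) * k a \<and> k a > 0"
  shows "ent J f = ent J g - expected_log J k"
proof -
  have "expected_log J (\<lambda>a. marginal J f (f a)) = expected_log J (\<lambda>a. marginal J g (g a) * k a)"
    by (rule expected_log_cong) (use factor in blast)
  also have "\<dots> = expected_log J (\<lambda>a. marginal J g (g a)) + expected_log J k"
    by (rule expected_log_mult) (use factor marginal_pos[of J, OF nonneg] in blast)
  finally show ?thesis
    unfolding ent_eq_expected_log_marginal by simp
qed

lemma expected_log_nonpos: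
  assumes nonneg: "\<And>a. J a \<ge> 0"
    and pos: "\<And>a. J a \<noteq> 0 \<Longrightarrow> t a > 0"
    and mass: "(\<Sum>a\<in>UNIV. J a * t a) \<le> (\<Sum>a\<in>UNIV. J a)"
  shows "expected_log J t \<le> 0"
proof -
  have "J a * log 2 (t a) \<le> J a * (t a - 1) / ln 2" for a
  proof (cases "J a = 0")
    case False
    have "log 2 (t a) = ln (t a) / ln 2"
      by (simp add: log_def)
    also have "\<dots> \<le> (t a - 1) / ln 2"
      using ln_le_minus_one[OF pos[OF False]] by (simp add: divide_right_mono)
    finally show ?thesis
      using nonneg[of a] by (metis mult_left_mono times_divide_eq_right)
  qed simp
  then have "expected_log J t \<le> (\<Sum>a\<in>UNIV. J a * (t a - 1) / ln 2)"
    unfolding expected_log_def by (rule sum_mono)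
  also have "\<dots> = ((\<Sum>a\<in>UNIV. J a * t a) - (\<Sum>a\<in>UNIV. J a)) / ln 2"
    by (simp add: sum_divide_distrib[symmetric] right_diff_distrib sum_subtractf)
  also have "\<dots> \<le> 0"
    using mass by (simp add: divide_nonpos_pos)
  finally show ?thesis .
qed

text \<open>P(f,g) P(g,h) / P(g) is the law making f and h conditionally independent given g;
its total mass is at most one, which bounds the expected likelihood ratio.\<close>

lemma markov_ratio_mass_le:
  fixes f :: "'a::finite \<Rightarrow> 'b" and g :: "'a \<Rightarrow> 'c" and h :: "'a \<Rightarrow> 'd"
  assumes nonneg: "\<And>a. J a \<ge> 0"
  defines "P \<equiv> marginal J (\<lambda>a. (f a, g a, h a))"
    and "Pfg \<equiv> marginal J (\<lambda>a. (f a, g a))"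
    and "Pgh \<equiv> marginal J (\<lambda>a. (g a, h a))"
    and "Pg \<equiv> marginal J g"
  shows "(\<Sum>a\<in>UNIV. J a * (Pfg (f a, g a) * Pgh (g a, h a) / (P (f a, g a, h a) * Pg (g a))))
        \<le> (\<Sum>a\<in>UNIV. J a)"
proof -
  define V where "V = (\<lambda>a. (f a, g a, h a))"
  define G where "G = (\<lambda>(b, c, d). Pfg (b, c) * Pgh (c, d) / Pg c)"
  have G_nonneg: "G v \<ge> 0" for v
    unfolding G_def Pfg_def Pgh_def Pg_def
    by (auto split: prod.splits intro!: divide_nonneg_nonneg mult_nonneg_nonneg marginal_nonneg nonneg)
  have "(\<Sum>a\<in>UNIV. J a * (Pfg (f a, g a) * Pgh (g a, h a) / (P (f a, g a, h a) * Pg (g a))))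
      = (\<Sum>a\<in>UNIV. J a * (G (V a) / P (V a)))"
    unfolding G_def V_def by (simp add: divide_divide_eq_left mult.commute)
  also have "\<dots> = (\<Sum>v\<in>range V. marginal J V v * (G v / P v))"
    by (rule sum_by_fibers)
  also have "\<dots> \<le> (\<Sum>v\<in>range V. G v)"
    by (rule sum_mono) (auto simp: P_def V_def[symmetric] G_nonneg)
  also have "\<dots> \<le> (\<Sum>v\<in>range f \<times> range g \<times> range h. G v)"
    by (rule sum_mono2) (auto simp: V_def G_nonneg)
  also have "\<dots> = (\<Sum>b\<in>range f. \<Sum>c\<in>range g. \<Sum>d\<in>range h. Pfg (b, c) * Pgh (c, d) / Pg c)"
    unfolding G_def by (simp add: sum.cartesian_product)
  also have "\<dots> = (\<Sum>b\<in>range f. \<Sum>c\<in>range g. Pfg (b, c) * (Pg c / Pg c))"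
    by (simp add: sum_divide_distrib[symmetric] sum_distrib_left[symmetric] Pgh_def Pg_def
        sum_marginal_snd; auto intro!: sum.cong)
  also have "\<dots> = (\<Sum>c\<in>range g. \<Sum>b\<in>range f. Pfg (b, c) * (Pg c / Pg c))"
    by (rule sum.swap)
  also have "\<dots> = (\<Sum>c\<in>range g. Pg c)"
    by (simp add: sum_distrib_right[symmetric] Pfg_def Pg_def sum_marginal_fst; auto intro!: sum.cong)
  also have "\<dots> = (\<Sum>a\<in>UNIV. J a)"
    unfolding Pg_def by (rule sum_marginal)
  finally show ?thesis .
qed

lemma cond_ent_conditioning_le:
  fixes f :: "'a::finite \<Rightarrow> 'b" and g :: "'a \<Rightarrow> 'c" and h :: "'a \<Rightarrow> 'd"
  assumes nonneg: "\<And>a. J a \<ge> 0"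
  shows "cond_ent J f (\<lambda>a. (g a, h a)) \<le> cond_ent J f g"
proof -
  define P where "P = (\<lambda>a. marginal J (\<lambda>a. (f a, g a, h a)) (f a, g a, h a))"
  define Pfg where "Pfg = (\<lambda>a. marginal J (\<lambda>a. (f a, g a)) (f a, g a))"
  define Pgh where "Pgh = (\<lambda>a. marginal J (\<lambda>a. (g a, h a)) (g a, h a))"
  define Pg where "Pg = (\<lambda>a. marginal J g (g a))"
  have pos: "P a > 0 \<and> Pfg a > 0 \<and> Pgh a > 0 \<and> Pg a > 0" if "J a \<noteq> 0" for a
    unfolding P_def Pfg_def Pgh_def Pg_def by (intro conjI marginal_pos) (use nonneg that in auto)
  have "expected_log J (\<lambda>a. Pfg a * Pgh a / (P a * Pg a)) \<le> 0"
  proof (rule expected_log_nonpos[OF nonneg])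
    show "Pfg a * Pgh a / (P a * Pg a) > 0" if "J a \<noteq> 0" for a
      using pos[OF that] by simp
    show "(\<Sum>a\<in>UNIV. J a * (Pfg a * Pgh a / (P a * Pg a))) \<le> (\<Sum>a\<in>UNIV. J a)"
      using markov_ratio_mass_le[of J f g h, OF nonneg] unfolding P_def Pfg_def Pgh_def Pg_def .
  qed
  moreover have "expected_log J (\<lambda>a. Pfg a * Pgh a / (P a * Pg a))
      = expected_log J Pfg + expected_log J Pgh - expected_log J P - expected_log J Pg"
  proof -
    have "J a * log 2 (Pfg a * Pgh a / (P a * Pg a))
        = J a * log 2 (Pfg a) + J a * log 2 (Pgh a) - J a * log 2 (P a) - J a * log 2 (Pg a)" for a
      using pos[of a] by (cases "J a = 0") (auto simp: log_mult log_divide algebra_simps)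
    then show ?thesis
      unfolding expected_log_def by (simp add: sum.distrib sum_subtractf)
  qed
  ultimately show ?thesis
    unfolding cond_ent_def ent_eq_expected_log_marginal P_def Pfg_def Pgh_def Pg_def by simp
qed

lemma sum_UNIV_prod:
  "(\<Sum>p\<in>(UNIV :: ('a::finite \<times> 'b::finite) set). g p) = (\<Sum>x\<in>UNIV. \<Sum>y\<in>UNIV. g (x, y))"
  by (simp add: sum.cartesian_product)

lemma if_conj_zero: "(if A \<and> B then t else (0::real)) = (if A then if B then t else 0 else 0)"
  by simp

lemma sum_if_const_cond: "(\<Sum>x\<in>S. if P then f x else (0::real)) = (if P then sum f S else 0)"
  by simp

locale factorized_source =
  fixes PX :: "'x1::finite \<times> 'x2::finite \<times> 'x3::finite \<times> 'y::finite \<Rightarrow> real"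
    and Q1 :: "'x1 \<Rightarrow> 'u1::finite \<Rightarrow> real"
    and Q2 :: "'x2 \<Rightarrow> 'u2::finite \<Rightarrow> real"
    and Q3 :: "'x3 \<Rightarrow> 'u3::finite \<Rightarrow> real"
    and Q4 :: "'u2 \<times> 'u3 \<Rightarrow> 'u4::finite \<Rightarrow> real"
    and J :: "'x1 \<times> 'x2 \<times> 'x3 \<times> 'y \<times> 'u1 \<times> 'u2 \<times> 'u3 \<times> 'u4 \<Rightarrow> real"
    and X1 :: "'x1 \<times> 'x2 \<times> 'x3 \<times> 'y \<times> 'u1 \<times> 'u2 \<times> 'u3 \<times> 'u4 \<Rightarrow> 'x1"
    and X2 :: "'x1 \<times> 'x2 \<times> 'x3 \<times> 'y \<times> 'u1 \<times> 'u2 \<times> 'u3 \<times> 'u4 \<Rightarrow> 'x2"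
    and X3 :: "'x1 \<times> 'x2 \<times> 'x3 \<times> 'y \<times> 'u1 \<times> 'u2 \<times> 'u3 \<times> 'u4 \<Rightarrow> 'x3"
    and Y :: "'x1 \<times> 'x2 \<times> 'x3 \<times> 'y \<times> 'u1 \<times> 'u2 \<times> 'u3 \<times> 'u4 \<Rightarrow> 'y"
    and U1 :: "'x1 \<times> 'x2 \<times> 'x3 \<times> 'y \<times> 'u1 \<times> 'u2 \<times> 'u3 \<times> 'u4 \<Rightarrow> 'u1"
    and U2 :: "'x1 \<times> 'x2 \<times> 'x3 \<times> 'y \<times> 'u1 \<times> 'u2 \<times> 'u3 \<times> 'u4 \<Rightarrow> 'u2"
    and U3 :: "'x1 \<times> 'x2 \<times> 'x3 \<times> 'y \<times> 'u1 \<times> 'u2 \<times> 'u3 \<times> 'u4 \<Rightarrow> 'u3"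
    and U4 :: "'x1 \<times> 'x2 \<times> 'x3 \<times> 'y \<times> 'u1 \<times> 'u2 \<times> 'u3 \<times> 'u4 \<Rightarrow> 'u4"
  assumes PX: "is_pmf PX" and Q1: "is_kernel Q1" and Q2: "is_kernel Q2"
    and Q3: "is_kernel Q3" and Q4: "is_kernel Q4"
    and J_def: "J = (\<lambda>(x1, x2, x3, y, u1, u2, u3, u4).
                  PX (x1, x2, x3, y) * Q1 x1 u1 * Q2 x2 u2 * Q3 x3 u3 * Q4 (u2, u3) u4)"
    and X1_def: "X1 = (\<lambda>(x1, x2, x3, y, u1, u2, u3, u4). x1)"
    and X2_def: "X2 = (\<lambda>(x1, x2, x3, y, u1, u2, u3, u4). x2)"
    and X3_def: "X3 = (\<lambda>(x1, x2, x3, y, u1, u2, u3, u4). x3)"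
    and Y_def: "Y = (\<lambda>(x1, x2, x3, y, u1, u2, u3, u4). y)"
    and U1_def: "U1 = (\<lambda>(x1, x2, x3, y, u1, u2, u3, u4). u1)"
    and U2_def: "U2 = (\<lambda>(x1, x2, x3, y, u1, u2, u3, u4). u2)"
    and U3_def: "U3 = (\<lambda>(x1, x2, x3, y, u1, u2, u3, u4). u3)"
    and U4_def: "U4 = (\<lambda>(x1, x2, x3, y, u1, u2, u3, u4). u4)"
begin

lemma kernel_sums: "sum (Q1 x1) UNIV = 1" "sum (Q2 x2) UNIV = 1" "sum (Q3 x3) UNIV = 1"
    "sum (Q4 u23) UNIV = 1"
  using Q1 Q2 Q3 Q4 unfolding is_kernel_def is_pmf_def by blast+

lemma J_nonneg: "J w \<ge> 0"
  using PX Q1 Q2 Q3 Q4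
  by (auto simp: J_def is_kernel_def is_pmf_def split: prod.splits intro!: mult_nonneg_nonneg)

lemma kernels_pos:
  assumes "J w \<noteq> 0"
  shows "Q1 (X1 w) (U1 w) > 0" "Q2 (X2 w) (U2 w) > 0" "Q3 (X3 w) (U3 w) > 0"
    "Q4 (U2 w, U3 w) (U4 w) > 0"
  using assms Q1 Q2 Q3 Q4
  by (auto simp: J_def X1_def X2_def X3_def U1_def U2_def U3_def U4_def is_kernel_def is_pmf_def
      order_less_le split: prod.splits)

lemmas marginal_simps = marginal_eq_sum_if J_def X1_def X2_def X3_def Y_def U1_def U2_def U3_def U4_def
  sum_UNIV_prod if_conj_zero sum_if_const_cond sum.delta sum.delta' kernel_sums
  sum_distrib_left[symmetric] sum_distrib_right[symmetric]

lemma marginal_XU: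
  "marginal J (\<lambda>w. ((X1 w, X2 w, X3 w), (U1 w, U2 w, U3 w))) ((x1, x2, x3), (u1, u2, u3))
   = marginal J (\<lambda>w. (X1 w, X2 w, X3 w)) (x1, x2, x3) * (Q1 x1 u1 * Q2 x2 u2 * Q3 x3 u3)"
  by (simp add: marginal_simps del: if_split)

lemma marginal_X1_U1: "marginal J (\<lambda>w. (X1 w, U1 w)) (x1, u1) = marginal J X1 x1 * Q1 x1 u1"
  by (simp add: marginal_simps del: if_split)

lemma marginal_X2_U2: "marginal J (\<lambda>w. (X2 w, U2 w)) (x2, u2) = marginal J X2 x2 * Q2 x2 u2"
  by (simp add: marginal_simps del: if_split)

lemma marginal_X3_U3: "marginal J (\<lambda>w. (X3 w, U3 w)) (x3, u3) = marginal J X3 x3 * Q3 x3 u3"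
  by (simp add: marginal_simps del: if_split)

lemma marginal_X23_U23_U1:
  "marginal J (\<lambda>w. ((X2 w, X3 w), (U2 w, U3 w), U1 w)) ((x2, x3), (u2, u3), u1)
   = marginal J (\<lambda>w. ((X2 w, X3 w), U1 w)) ((x2, x3), u1) * (Q2 x2 u2 * Q3 x3 u3)"
  by (simp add: marginal_simps del: if_split)

lemma marginal_Y_U14_U23:
  "marginal J (\<lambda>w. (Y w, (U1 w, U4 w), (U2 w, U3 w))) (y, (u1, u4), (u2, u3))
   = marginal J (\<lambda>w. (Y w, U1 w, U2 w, U3 w)) (y, u1, u2, u3) * Q4 (u2, u3) u4"
  by (simp add: marginal_simps del: if_split)

lemma marginal_U14_U23:
  "marginal J (\<lambda>w. ((U1 w, U4 w), (U2 w, U3 w))) ((u1, u4), (u2, u3))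
   = marginal J (\<lambda>w. (U1 w, U2 w, U3 w)) (u1, u2, u3) * Q4 (u2, u3) u4"
  by (simp add: marginal_simps del: if_split)

lemma ent_XU:
  "ent J (\<lambda>w. ((X1 w, X2 w, X3 w), (U1 w, U2 w, U3 w)))
   = ent J (\<lambda>w. (X1 w, X2 w, X3 w)) - (expected_log J (\<lambda>w. Q1 (X1 w) (U1 w))
       + expected_log J (\<lambda>w. Q2 (X2 w) (U2 w)) + expected_log J (\<lambda>w. Q3 (X3 w) (U3 w)))"
proof -
  have "ent J (\<lambda>w. ((X1 w, X2 w, X3 w), (U1 w, U2 w, U3 w)))
      = ent J (\<lambda>w. (X1 w, X2 w, X3 w))
        - expected_log J (\<lambda>w. Q1 (X1 w) (U1 w) * Q2 (X2 w) (U2 w) * Q3 (X3 w) (U3 w))"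
    by (rule ent_eq_diff_expected_log[OF J_nonneg]) (simp add: marginal_XU kernels_pos)
  then show ?thesis
    by (simp add: expected_log_mult kernels_pos)
qed

lemma ent_X1_U1: "ent J (\<lambda>w. (X1 w, U1 w)) = ent J X1 - expected_log J (\<lambda>w. Q1 (X1 w) (U1 w))"
  by (rule ent_eq_diff_expected_log[OF J_nonneg]) (simp add: marginal_X1_U1 kernels_pos)

lemma ent_X2_U2: "ent J (\<lambda>w. (X2 w, U2 w)) = ent J X2 - expected_log J (\<lambda>w. Q2 (X2 w) (U2 w))"
  by (rule ent_eq_diff_expected_log[OF J_nonneg]) (simp add: marginal_X2_U2 kernels_pos)

lemma ent_X3_U3: "ent J (\<lambda>w. (X3 w, U3 w)) = ent J X3 - expected_log J (\<lambda>w. Q3 (X3 w) (U3 w))"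
  by (rule ent_eq_diff_expected_log[OF J_nonneg]) (simp add: marginal_X3_U3 kernels_pos)

lemma ent_X23_U23_U1:
  "ent J (\<lambda>w. ((X2 w, X3 w), (U2 w, U3 w), U1 w))
   = ent J (\<lambda>w. ((X2 w, X3 w), U1 w))
     - (expected_log J (\<lambda>w. Q2 (X2 w) (U2 w)) + expected_log J (\<lambda>w. Q3 (X3 w) (U3 w)))"
proof -
  have "ent J (\<lambda>w. ((X2 w, X3 w), (U2 w, U3 w), U1 w))
      = ent J (\<lambda>w. ((X2 w, X3 w), U1 w)) - expected_log J (\<lambda>w. Q2 (X2 w) (U2 w) * Q3 (X3 w) (U3 w))"
    by (rule ent_eq_diff_expected_log[OF J_nonneg]) (simp add: marginal_X23_U23_U1 kernels_pos)
  then show ?thesis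
    by (simp add: expected_log_mult kernels_pos)
qed

lemma ent_Y_U14_U23:
  "ent J (\<lambda>w. (Y w, (U1 w, U4 w), (U2 w, U3 w)))
   = ent J (\<lambda>w. (Y w, U1 w, U2 w, U3 w)) - expected_log J (\<lambda>w. Q4 (U2 w, U3 w) (U4 w))"
  by (rule ent_eq_diff_expected_log[OF J_nonneg]) (simp add: marginal_Y_U14_U23 kernels_pos)

lemma ent_U14_U23:
  "ent J (\<lambda>w. ((U1 w, U4 w), (U2 w, U3 w)))
   = ent J (\<lambda>w. (U1 w, U2 w, U3 w)) - expected_log J (\<lambda>w. Q4 (U2 w, U3 w) (U4 w))"
  by (rule ent_eq_diff_expected_log[OF J_nonneg]) (simp add: marginal_U14_U23 kernels_pos)

lemma rate_terms_eq:
  "mut_inf J (\<lambda>w. (X1 w, X2 w, X3 w)) (\<lambda>w. (U1 w, U2 w, U3 w))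
     + cond_mut_inf J (\<lambda>w. (X2 w, X3 w)) (\<lambda>w. (U2 w, U3 w)) U1
   = mut_inf J X1 U1 + 2 * (mut_inf J X2 U2 + mut_inf J X3 U3)
     - 2 * (mut_inf J U2 U1 + mut_inf J U3 (\<lambda>w. (U1 w, U2 w)))"
proof -
  have "ent J (\<lambda>w. ((U2 w, U3 w), U1 w)) = ent J (\<lambda>w. (U1 w, U2 w, U3 w))"
    and "ent J (\<lambda>w. (U2 w, U1 w)) = ent J (\<lambda>w. (U1 w, U2 w))"
    and "ent J (\<lambda>w. (U3 w, U1 w, U2 w)) = ent J (\<lambda>w. (U1 w, U2 w, U3 w))"
    by (rule ent_cong; auto)+
  then show ?thesis
    unfolding mut_inf_def cond_mut_inf_def
    by (simp add: ent_XU ent_X1_U1 ent_X2_U2 ent_X3_U3 ent_X23_U23_U1)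
qed

lemma cond_ent_Y_le: "cond_ent J Y (\<lambda>w. (U1 w, U2 w, U3 w)) \<le> cond_ent J Y (\<lambda>w. (U1 w, U4 w))"
proof -
  have "cond_ent J Y (\<lambda>w. (U1 w, U2 w, U3 w))
      = cond_ent J Y (\<lambda>w. ((U1 w, U4 w), (U2 w, U3 w)))"
    unfolding cond_ent_def by (simp add: ent_Y_U14_U23 ent_U14_U23)
  also have "\<dots> \<le> cond_ent J Y (\<lambda>w. (U1 w, U4 w))"
    by (rule cond_ent_conditioning_le[OF J_nonneg])
  finally show ?thesis .
qed

end

theorem lemma1:
  fixes s :: real
    and PX :: "'x1::finite \<times> 'x2::finite \<times> 'x3::finite \<times> 'y::finite \<Rightarrow> real"
    and Q1 :: "'x1 \<Rightarrow> 'u1::finite \<Rightarrow> real"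
    and Q2 :: "'x2 \<Rightarrow> 'u2::finite \<Rightarrow> real"
    and Q3 :: "'x3 \<Rightarrow> 'u3::finite \<Rightarrow> real"
    and Q4 :: "'u2 \<times> 'u3 \<Rightarrow> 'u4::finite \<Rightarrow> real"
    and J :: "'x1 \<times> 'x2 \<times> 'x3 \<times> 'y \<times> 'u1 \<times> 'u2 \<times> 'u3 \<times> 'u4 \<Rightarrow> real"
    and X1 :: "'x1 \<times> 'x2 \<times> 'x3 \<times> 'y \<times> 'u1 \<times> 'u2 \<times> 'u3 \<times> 'u4 \<Rightarrow> 'x1"
    and X2 X3 Y U1 U2 U3 U4
  assumes "s \<ge> 0"
    and "is_pmf PX" and "is_kernel Q1" and "is_kernel Q2" and "is_kernel Q3" and "is_kernel Q4"
    and J_def: "J = (\<lambda>(x1, x2, x3, y, u1, u2, u3, u4).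
                  PX (x1, x2, x3, y) * Q1 x1 u1 * Q2 x2 u2 * Q3 x3 u3 * Q4 (u2, u3) u4)"
    and "X1 = (\<lambda>(x1, x2, x3, y, u1, u2, u3, u4). x1)"
    and "X2 = (\<lambda>(x1, x2, x3, y, u1, u2, u3, u4). x2)"
    and "X3 = (\<lambda>(x1, x2, x3, y, u1, u2, u3, u4). x3)"
    and "Y = (\<lambda>(x1, x2, x3, y, u1, u2, u3, u4). y)"
    and "U1 = (\<lambda>(x1, x2, x3, y, u1, u2, u3, u4). u1)"
    and "U2 = (\<lambda>(x1, x2, x3, y, u1, u2, u3, u4). u2)"
    and "U3 = (\<lambda>(x1, x2, x3, y, u1, u2, u3, u4). u3)"
    and "U4 = (\<lambda>(x1, x2, x3, y, u1, u2, u3, u4). u4)"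
  shows "- cond_ent J Y (\<lambda>w. (U1 w, U2 w, U3 w))
           - s * (mut_inf J (\<lambda>w. (X1 w, X2 w, X3 w)) (\<lambda>w. (U1 w, U2 w, U3 w))
                  + cond_mut_inf J (\<lambda>w. (X2 w, X3 w)) (\<lambda>w. (U2 w, U3 w)) U1)
         \<ge> - cond_ent J Y (\<lambda>w. (U1 w, U4 w))
           - s * mut_inf J X1 U1
           - 2 * s * (mut_inf J X2 U2 + mut_inf J X3 U3)
           + 2 * s * (mut_inf J U2 U1 + mut_inf J U3 (\<lambda>w. (U1 w, U2 w)))"
proof -
  interpret factorized_source PX Q1 Q2 Q3 Q4 J X1 X2 X3 Y U1 U2 U3 U4
    using assms(2-) by unfold_locales
  have "s * (mut_inf J (\<lambda>w. (X1 w, X2 w, X3 w)) (\<lambda>w. (U1 w, U2 w, U3 w))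
      + cond_mut_inf J (\<lambda>w. (X2 w, X3 w)) (\<lambda>w. (U2 w, U3 w)) U1)
    = s * mut_inf J X1 U1 + 2 * s * (mut_inf J X2 U2 + mut_inf J X3 U3)
      - 2 * s * (mut_inf J U2 U1 + mut_inf J U3 (\<lambda>w. (U1 w, U2 w)))"
    by (subst rate_terms_eq) (simp add: algebra_simps)
  with cond_ent_Y_le show ?thesis
    by linarith
qed

end
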